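(* Let $\mathbb{K}$ be a field of characteristic not $2$ and $n\geq 3$. Let $\mathcal{V}$ be a linear subspace of $M_n(\mathbb{K})$ in which every matrix has at most two distinct eigenvalues in $\mathbb{K}$. If $A,B\in\mathcal{V}$ satisfy $\operatorname{rk}A\leq 1$, $\operatorname{rk}B\leq 1$ and $\operatorname{tr}A=\operatorname{tr}B=0$, then $\operatorname{tr}(AB)=0$. *)

theory Defs
  imports "Jordan_Normal_Form.DL_Rank" "Jordan_Normal_Form.Char_Poly"
begin

definition mat_trace :: "'a :: comm_ring_1 mat \<Rightarrow> 'a" where
  "mat_trace A = (\<Sum>i<dim_row A. A $$ (i, i))"

definition mat_subspace :: "nat \<Rightarrow> 'a :: field mat set \<Rightarrow> bool" where
  "mat_subspace n V \<longleftrightarrow> V \<subseteq> carrier_mat n n \<and> 0\<^sub>m n n \<in> V \<and>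
     (\<forall>A\<in>V. \<forall>B\<in>V. A + B \<in> V) \<and> (\<forall>c. \<forall>A\<in>V. c \<cdot>\<^sub>m A \<in> V)"

definition at_most_two_eigenvalues :: "'a :: field mat \<Rightarrow> bool" where
  "at_most_two_eigenvalues M \<longleftrightarrow>
     (\<forall>a b c. eigenvalue M a \<and> eigenvalue M b \<and> eigenvalue M c \<longrightarrow> a = b \<or> a = c \<or> b = c)"

end

theory Submission
  imports Defs
begin

text \<open>
  Write the rank-one traceless matrices as \<open>A = a b\<^sup>T\<close> and \<open>B = c d\<^sup>T\<close> with \<open>b\<^sup>T a = d\<^sup>T c = 0\<close>;
  then \<open>tr (A B) = (b\<^sup>T c) (d\<^sup>T a)\<close>. If this were nonzero, then for \<open>t = 1 / tr (A B)\<close> the matrix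
  \<open>A + t B\<close> in the subspace would have the eigenvectors \<open>(b\<^sup>T c) a \<plusminus> c\<close> for the eigenvalues \<open>\<plusminus>1\<close>, which differ
  as the characteristic is not 2, and, since \<open>n \<ge> 3\<close>, a nonzero vector orthogonal to both \<open>b\<close>
  and \<open>d\<close> in its kernel: three distinct eigenvalues.
\<close>

definition outer_mat :: "'a :: comm_ring_1 vec \<Rightarrow> 'a vec \<Rightarrow> 'a mat" where
  "outer_mat a b = mat (dim_vec a) (dim_vec b) (\<lambda>(i, j). a $ i * b $ j)"

lemma outer_mat_carrier [simp]:
  "a \<in> carrier_vec n \<Longrightarrow> b \<in> carrier_vec m \<Longrightarrow> outer_mat a b \<in> carrier_mat n m"
  by (simp add: outer_mat_def)

lemma outer_mat_dims [simp]:
  "dim_row (outer_mat a b) = dim_vec a" "dim_col (outer_mat a b) = dim_vec b"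
  by (simp_all add: outer_mat_def)

lemma outer_mat_index [simp]:
  "i < dim_vec a \<Longrightarrow> j < dim_vec b \<Longrightarrow> outer_mat a b $$ (i, j) = a $ i * b $ j"
  by (simp add: outer_mat_def)

lemma smult_outer_mat:
  "k \<cdot>\<^sub>m outer_mat a b = outer_mat (k \<cdot>\<^sub>v a) b"
  by (auto simp: outer_mat_def)

lemma outer_mat_mult_vec:
  assumes "b \<in> carrier_vec n" and "u \<in> carrier_vec n"
  shows "outer_mat a b *\<^sub>v u = (b \<bullet> u) \<cdot>\<^sub>v a"
proof (rule eq_vecI)
  fix i assume "i < dim_vec ((b \<bullet> u) \<cdot>\<^sub>v a)"
  then have "row (outer_mat a b) i = a $ i \<cdot>\<^sub>v b"
    using assms by (auto simp: outer_mat_def)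
  then show "(outer_mat a b *\<^sub>v u) $ i = ((b \<bullet> u) \<cdot>\<^sub>v a) $ i"
    using assms \<open>i < _\<close> by (simp add: outer_mat_def mult.commute)
qed simp

lemma mat_trace_outer_mat:
  assumes "a \<in> carrier_vec n" and "b \<in> carrier_vec n"
  shows "mat_trace (outer_mat a b) = b \<bullet> a"
  using assms by (auto simp: mat_trace_def scalar_prod_def lessThan_atLeast0 mult.commute
      intro!: sum.cong)

lemma mat_trace_smult:
  "A \<in> carrier_mat n n \<Longrightarrow> mat_trace (k \<cdot>\<^sub>m A) = k * mat_trace A"
  by (simp add: mat_trace_def sum_distrib_left)

lemma outer_mat_mult_outer_mat:
  assumes "b \<in> carrier_vec n" "c \<in> carrier_vec n"
  shows "outer_mat a b * outer_mat c d = (b \<bullet> c) \<cdot>\<^sub>m outer_mat a d"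
proof (rule eq_matI)
  fix i j assume "i < dim_row ((b \<bullet> c) \<cdot>\<^sub>m outer_mat a d)" "j < dim_col ((b \<bullet> c) \<cdot>\<^sub>m outer_mat a d)"
  moreover from this have "row (outer_mat a b) i = a $ i \<cdot>\<^sub>v b" "col (outer_mat c d) j = d $ j \<cdot>\<^sub>v c"
    using assms by (auto simp: outer_mat_def)
  ultimately show "(outer_mat a b * outer_mat c d) $$ (i, j) = ((b \<bullet> c) \<cdot>\<^sub>m outer_mat a d) $$ (i, j)"
    using assms by (simp add: mult_ac)
qed simp_all

lemma mat_trace_outer_mat_mult:
  assumes "a \<in> carrier_vec n" "b \<in> carrier_vec n" "c \<in> carrier_vec n" "d \<in> carrier_vec n"
  shows "mat_trace (outer_mat a b * outer_mat c d) = (b \<bullet> c) * (d \<bullet> a)"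
  using assms by (simp add: outer_mat_mult_outer_mat mat_trace_smult[of _ n] mat_trace_outer_mat)

lemma det2_zero_of_nontrivial_solution:
  fixes x y a b c d :: "'a :: field"
  assumes "x * a + y * b = 0" and "x * c + y * d = 0" and "x \<noteq> 0 \<or> y \<noteq> 0"
  shows "a * d = b * c"
proof -
  have "x * (a * d - b * c) = d * (x * a + y * b) - b * (x * c + y * d)"
    and "y * (a * d - b * c) = a * (x * c + y * d) - c * (x * a + y * b)"
    by (simp_all add: algebra_simps)
  with assms show ?thesis by auto
qed

lemma (in vec_space) rank_le_1_minor:
  assumes A: "A \<in> carrier_mat n nc" and rank: "rank A \<le> 1"
    and j: "j < nc" and k: "k < nc" and p: "p < n" and q: "q < n"
  shows "A $$ (p, j) * A $$ (q, k) = A $$ (p, k) * A $$ (q, j)"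
proof (cases "col A j = col A k")
  case True
  have "A $$ (x, j) = A $$ (x, k)" if "x < n" for x
    using that True A j k by (metis carrier_matD index_col)
  then show ?thesis using p q by (simp add: mult.commute)
next
  case distinct_cols: False
  define C where "C = mat_of_cols n [col A j, col A k]"
  have C: "C \<in> carrier_mat n 2"
    unfolding C_def using mat_of_cols_carrier(1)[of n "[col A j, col A k]"] by (simp add: numeral_2_eq_2)
  have cols_C: "cols C = [col A j, col A k]"
    unfolding C_def using A j k by (intro cols_mat_of_cols) auto
  have "lin_dep (set (cols C))"
  proof (rule ccontr)
    assume "lin_indpt (set (cols C))"
    moreover have "set (cols C) \<subseteq> set (cols A)"
      using cols_C A j k by (auto simp: cols_def)
    ultimately have "card (set (cols C)) \<le> rank A"
      using rank_ge_card_indpt[OF A] by blast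
    with rank cols_C distinct_cols show False by simp
  qed
  then obtain v where v: "v \<in> carrier_vec 2" "v \<noteq> 0\<^sub>v 2" "C *\<^sub>v v = 0\<^sub>v n"
    using lin_depE[OF C] cols_C distinct_cols by auto
  have entry: "v $ 0 * A $$ (x, j) + v $ 1 * A $$ (x, k) = 0" if "x < n" for x
  proof -
    have "(C *\<^sub>v v) $ x = C $$ (x, 0) * v $ 0 + C $$ (x, 1) * v $ 1"
      using C v(1) that by (simp add: scalar_prod_def numeral_2_eq_2 lessThan_atLeast0)
    with v(3) that A j k show ?thesis
      by (simp add: C_def mat_of_cols_index mult.commute)
  qed
  have "v $ 0 \<noteq> 0 \<or> v $ 1 \<noteq> 0"
    using v(1,2) by (auto intro!: eq_vecI simp: less_2_cases_iff)
  with entry[OF p] entry[OF q] show ?thesis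
    by (rule det2_zero_of_nontrivial_solution)
qed

lemma rank_le_1_imp_outer_mat:
  fixes A :: "'a :: field mat"
  assumes A: "A \<in> carrier_mat n nc" and rank: "vec_space.rank n A \<le> 1"
  obtains a b where "a \<in> carrier_vec n" "b \<in> carrier_vec nc" "A = outer_mat a b"
proof (cases "\<exists>p<n. \<exists>j<nc. A $$ (p, j) \<noteq> 0")
  case True
  then obtain p j0 where p: "p < n" and j0: "j0 < nc" and nz: "A $$ (p, j0) \<noteq> 0" by auto
  define a where "a = col A j0"
  define b where "b = (1 / A $$ (p, j0)) \<cdot>\<^sub>v row A p"
  have "A = outer_mat a b"
  proof (rule eq_matI)
    fix i j assume "i < dim_row (outer_mat a b)" and "j < dim_col (outer_mat a b)"
    then have i: "i < n" and j: "j < nc" using A by (simp_all add: a_def b_def)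
    have dims: "dim_row A = n" "dim_col A = nc" using A by simp_all
    have "A $$ (p, j0) * A $$ (i, j) = A $$ (p, j) * A $$ (i, j0)"
      using vec_space.rank_le_1_minor[OF A rank j0 j p i] .
    then have "A $$ (i, j) = A $$ (i, j0) * (A $$ (p, j) / A $$ (p, j0))"
      using nz by (simp add: eq_divide_eq mult_ac)
    then show "A $$ (i, j) = outer_mat a b $$ (i, j)"
      using i j j0 p dims by (simp add: a_def b_def)
  qed (use A in \<open>simp_all add: a_def b_def\<close>)
  moreover have "a \<in> carrier_vec n" "b \<in> carrier_vec nc"
    using A j0 p by (auto simp: a_def b_def)
  ultimately show ?thesis
    using that by blast
next
  case False
  then have "A = outer_mat (0\<^sub>v n) (0\<^sub>v nc)"
    using A by (intro eq_matI) auto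
  then show ?thesis
    by (rule that[rotated 2]) auto
qed

lemma common_orthogonal_vector:
  fixes b d :: "'a :: field vec"
  assumes "n \<ge> 3" and b: "b \<in> carrier_vec n" and d: "d \<in> carrier_vec n"
  obtains v where "v \<in> carrier_vec n" "v \<noteq> 0\<^sub>v n" "b \<bullet> v = 0" "d \<bullet> v = 0"
proof -
  define Q where "Q = mat\<^sub>r n n (\<lambda>i. if i = 2 then 0\<^sub>v n else if i = 0 then b else d)"
  have Q: "Q \<in> carrier_mat n n" by (simp add: Q_def)
  have "det Q = 0"
    unfolding Q_def using assms by (intro det_row_0) auto
  then obtain v where v: "v \<in> carrier_vec n" "v \<noteq> 0\<^sub>v n" "Q *\<^sub>v v = 0\<^sub>v n"
    using det_0_iff_vec_prod_zero_field[OF Q] by blast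
  have "(Q *\<^sub>v v) $ 0 = b \<bullet> v" "(Q *\<^sub>v v) $ 1 = d \<bullet> v"
    using assms by (simp_all add: Q_def)
  with v that show ?thesis using assms by simp
qed

lemma outer_mat_pencil_mult_vec:
  assumes "a \<in> carrier_vec n" "b \<in> carrier_vec n" "c \<in> carrier_vec n" "d \<in> carrier_vec n"
    and "u \<in> carrier_vec n"
  shows "(outer_mat a b + t \<cdot>\<^sub>m outer_mat c d) *\<^sub>v u = (b \<bullet> u) \<cdot>\<^sub>v a + (t * (d \<bullet> u)) \<cdot>\<^sub>v c"
  using assms
  by (simp add: add_mult_distrib_mat_vec[of _ n n] smult_outer_mat outer_mat_mult_vec
      smult_smult_assoc mult.commute)

lemma eigenvalue_outer_mat_pencil_unit:
  fixes a b c d :: "'a :: field vec"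
  assumes vecs: "a \<in> carrier_vec n" "b \<in> carrier_vec n" "c \<in> carrier_vec n" "d \<in> carrier_vec n"
    and "b \<bullet> a = 0" and "d \<bullet> c = 0" and t: "t * ((b \<bullet> c) * (d \<bullet> a)) = 1" and "e * e = 1"
  shows "eigenvalue (outer_mat a b + t \<cdot>\<^sub>m outer_mat c d) e"
proof -
  define u where "u = (b \<bullet> c) \<cdot>\<^sub>v a + e \<cdot>\<^sub>v c"
  have u: "u \<in> carrier_vec n" using vecs by (simp add: u_def)
  have bu: "b \<bullet> u = e * (b \<bullet> c)" and du: "d \<bullet> u = (b \<bullet> c) * (d \<bullet> a)"
    using assms by (simp_all add: u_def scalar_prod_add_distrib[of _ n])
  have "(outer_mat a b + t \<cdot>\<^sub>m outer_mat c d) *\<^sub>v u = (e * (b \<bullet> c)) \<cdot>\<^sub>v a + c"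
    using vecs u t by (simp add: outer_mat_pencil_mult_vec bu du)
  also have "\<dots> = e \<cdot>\<^sub>v u"
    using vecs \<open>e * e = 1\<close>
    by (simp add: u_def smult_add_distrib_vec[of _ n] smult_smult_assoc mult.assoc[symmetric])
  finally have "(outer_mat a b + t \<cdot>\<^sub>m outer_mat c d) *\<^sub>v u = e \<cdot>\<^sub>v u" .
  moreover have "u \<noteq> 0\<^sub>v n"
    using du t vecs by auto
  ultimately show ?thesis
    using u vecs by (auto simp: eigenvalue_def eigenvector_def)
qed

lemma eigenvalue_0_outer_mat_pencil:
  fixes a b c d :: "'a :: field vec"
  assumes "n \<ge> 3" "a \<in> carrier_vec n" "b \<in> carrier_vec n" "c \<in> carrier_vec n" "d \<in> carrier_vec n"
  shows "eigenvalue (outer_mat a b + t \<cdot>\<^sub>m outer_mat c d) 0"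
proof -
  obtain v where v: "v \<in> carrier_vec n" "v \<noteq> 0\<^sub>v n" and "b \<bullet> v = 0" "d \<bullet> v = 0"
    using common_orthogonal_vector assms by metis
  then have "(outer_mat a b + t \<cdot>\<^sub>m outer_mat c d) *\<^sub>v v = 0 \<cdot>\<^sub>v v"
    using assms by (intro eq_vecI) (simp_all add: outer_mat_pencil_mult_vec)
  with v show ?thesis
    using assms by (auto simp: eigenvalue_def eigenvector_def)
qed

lemma one_neq_minus_one_if_CHAR_neq_2:
  assumes "CHAR('a :: field) \<noteq> 2"
  shows "(1 :: 'a) \<noteq> - 1"
proof
  assume "(1 :: 'a) = - 1"
  then have "of_nat 2 = (0 :: 'a)" by (simp add: eq_neg_iff_add_eq_0)
  then have "CHAR('a) dvd 2" by (simp only: of_nat_eq_0_iff_char_dvd)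
  with assms show False
    by (metis CHAR_not_1 One_nat_def prime_nat_iff two_is_prime_nat)
qed

theorem mainTheorem10:
  fixes V :: "'a :: field mat set" and n :: nat and A B :: "'a mat"
  assumes "CHAR('a) \<noteq> 2"
    and "n \<ge> 3"
    and "mat_subspace n V"
    and "\<forall>M\<in>V. at_most_two_eigenvalues M"
    and "A \<in> V" and "B \<in> V"
    and "vec_space.rank n A \<le> 1" and "vec_space.rank n B \<le> 1"
    and "mat_trace A = 0" and "mat_trace B = 0"
  shows "mat_trace (A * B) = 0"
proof (rule ccontr)
  assume trace_AB: "mat_trace (A * B) \<noteq> 0"
  have "A \<in> carrier_mat n n" "B \<in> carrier_mat n n"
    using assms(3,5,6) by (auto simp: mat_subspace_def)
  then obtain a b c d where vecs: "a \<in> carrier_vec n" "b \<in> carrier_vec n" "c \<in> carrier_vec n" "d \<in> carrier_vec n"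
    and A: "A = outer_mat a b" and B: "B = outer_mat c d"
    using rank_le_1_imp_outer_mat assms(7,8) by metis
  have "b \<bullet> a = 0" "d \<bullet> c = 0"
    using assms(9,10) vecs by (simp_all add: A B mat_trace_outer_mat)
  have trace_AB_eq: "mat_trace (A * B) = (b \<bullet> c) * (d \<bullet> a)"
    using vecs by (simp add: A B mat_trace_outer_mat_mult)
  define t where "t = inverse (mat_trace (A * B))"
  have t: "t * ((b \<bullet> c) * (d \<bullet> a)) = 1"
    using trace_AB unfolding t_def trace_AB_eq[symmetric] by simp
  have "A + t \<cdot>\<^sub>m B \<in> V"
    using assms(3,5,6) by (simp add: mat_subspace_def)
  then have "at_most_two_eigenvalues (A + t \<cdot>\<^sub>m B)"
    using assms(4) by blast
  moreover have "eigenvalue (A + t \<cdot>\<^sub>m B) 0" "eigenvalue (A + t \<cdot>\<^sub>m B) 1" "eigenvalue (A + t \<cdot>\<^sub>m B) (- 1)"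
    using eigenvalue_0_outer_mat_pencil eigenvalue_outer_mat_pencil_unit[OF vecs _ _ t]
      \<open>b \<bullet> a = 0\<close> \<open>d \<bullet> c = 0\<close> vecs assms(2) by (simp_all add: A B)
  ultimately have "(0 :: 'a) = 1 \<or> (0 :: 'a) = - 1 \<or> (1 :: 'a) = - 1"
    unfolding at_most_two_eigenvalues_def by blast
  then show False
    using one_neq_minus_one_if_CHAR_neq_2[OF assms(1)] by simp
qed

end
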